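(* Let $N\ge1$, $d\ge1$, $H\in(0,1)^N$ and let $v$ be an $(N,d)$-fractional Brownian sheet with Hurst parameter $H$. If $x^1,\dots,x^m\in(0,\infty)^N$ are distinct points, then the real random variables $v_1(x^1),\dots,v_1(x^m)$ are linearly independent.
   Context: An $(N,d)$-fractional Brownian sheet with Hurst parameter $H\in(0,1)^N$ is an $\mathbb{R}^d$-valued continuous centered Gaussian field $\{v(x),x\in\mathbb{R}^N_+\}$ with $\mathrm E(v_j(x)v_\ell(y))=\delta_{j,\ell}\prod_{i=1}^N\frac12(|x_i|^{2H_i}+|y_i|^{2H_i}-|x_i-y_i|^{2H_i})$; $v_1$ denotes its first component. *)

theory Defs
  imports "HOL-Probability.Probability"
begin

definition real_gaussian :: "'a measure \<Rightarrow> ('a \<Rightarrow> real) \<Rightarrow> bool" where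
  "real_gaussian M X \<longleftrightarrow> X \<in> borel_measurable M \<and>
     (\<exists>mu sigma. (sigma = 0 \<and> distr M borel X = return borel mu) \<or>
                 (sigma > 0 \<and> distributed M lborel X (normal_density mu sigma)))"

definition gaussian_family :: "'a measure \<Rightarrow> ('i \<Rightarrow> 'a \<Rightarrow> real) \<Rightarrow> 'i set \<Rightarrow> bool" where
  "gaussian_family M X I \<longleftrightarrow>
     (\<forall>J c. finite J \<and> J \<subseteq> I \<longrightarrow> real_gaussian M (\<lambda>\<omega>. \<Sum>i\<in>J. c i * X i \<omega>))"

definition nonneg_orthant :: "(real^'n) set" where
  "nonneg_orthant = {x. \<forall>i. 0 \<le> x $ i}"

definition fbs_cov :: "real^'n \<Rightarrow> real^'n \<Rightarrow> real^'n \<Rightarrow> real" where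
  "fbs_cov H x y = (\<Prod>i\<in>UNIV. (1/2) * (\<bar>x $ i\<bar> powr (2 * H $ i) + \<bar>y $ i\<bar> powr (2 * H $ i)
                                       - \<bar>x $ i - y $ i\<bar> powr (2 * H $ i)))"

text \<open>(N,d)-fractional Brownian sheet on the probability space M: v \<omega> x j is the j-th
  component (j < d, components indexed 0..d-1, so v_1 is component 0) at the point x.\<close>
definition frac_brownian_sheet ::
  "'a measure \<Rightarrow> nat \<Rightarrow> real^'n \<Rightarrow> ('a \<Rightarrow> real^'n \<Rightarrow> nat \<Rightarrow> real) \<Rightarrow> bool" where
  "frac_brownian_sheet M d H v \<longleftrightarrow>
     prob_space M \<and>
     gaussian_family M (\<lambda>(x, j) \<omega>. v \<omega> x j) (nonneg_orthant \<times> {..<d}) \<and>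
     (\<forall>\<omega>\<in>space M. \<forall>j<d. continuous_on nonneg_orthant (\<lambda>x. v \<omega> x j)) \<and>
     (\<forall>x\<in>nonneg_orthant. \<forall>j<d. (\<integral>\<omega>. v \<omega> x j \<partial>M) = 0) \<and>
     (\<forall>x\<in>nonneg_orthant. \<forall>y\<in>nonneg_orthant. \<forall>j<d. \<forall>l<d.
        (\<integral>\<omega>. v \<omega> x j * v \<omega> y l \<partial>M) = (if j = l then 1 else 0) * fbs_cov H x y)"

end

theory Submission
  imports Defs
begin

(*
  The covariance of v_1 on the open orthant is the tensor product of the one-dimensional
  fractional Brownian motion kernels 1/2 (|s|^2H + |t|^2H - |s - t|^2H), so it is enough that
  these are strictly positive definite on the nonzero reals and that strict positive definiteness
  survives tensor products (a strict Schur product theorem: expand one factor in finitely many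
  features, obtained by repeated Schur complements).

  For the one-dimensional kernel, |s|^2H = C * integral over u > 0 of (1 - exp (-u s^2)) u^(-1-H)
  writes it as a mixture of the kernels 1 - exp (-u s^2) - exp (-u t^2) + exp (-u (s - t)^2).
  Each of these is strictly positive definite: expanding exp (2 u s t) turns its quadratic form
  into a sum of squares of power sums, and the power sums determine the coefficients.

  Finally, if sum_k c_k v_1(x^k) = 0 almost surely, its second moment, which is the quadratic
  form of the covariance kernel at c, vanishes, hence c = 0.
*)

section \<open>Quadratic forms of kernels\<close>

definition quad_form :: "('a \<Rightarrow> 'a \<Rightarrow> real) \<Rightarrow> 'a set \<Rightarrow> ('a \<Rightarrow> real) \<Rightarrow> real" where
  "quad_form k F c = (\<Sum>x\<in>F. \<Sum>y\<in>F. c x * c y * k x y)"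

lemma quad_form_cong:
  "(\<And>x. x \<in> F \<Longrightarrow> c x = c' x) \<Longrightarrow> quad_form k F c = quad_form k F c'"
  unfolding quad_form_def by (intro sum.cong refl) auto

lemma quad_form_singleton [simp]: "quad_form k {a} c = c a * c a * k a a"
  by (simp add: quad_form_def)

lemma quad_form_one [simp]: "quad_form (\<lambda>_ _. 1) F c = (\<Sum>x\<in>F. c x)\<^sup>2"
  by (simp add: quad_form_def power2_eq_square sum_product)

lemma quad_form_add:
  "quad_form (\<lambda>x y. k x y + k' x y) F c = quad_form k F c + quad_form k' F c"
  by (simp add: quad_form_def sum.distrib distrib_left)

lemma quad_form_cmult: "quad_form (\<lambda>x y. a * k x y) F c = a * quad_form k F c"
  by (simp add: quad_form_def sum_distrib_left mult_ac)

lemma quad_form_scale: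
  "quad_form (\<lambda>x y. g x * g y * k x y) F c = quad_form k F (\<lambda>x. c x * g x)"
  by (simp add: quad_form_def mult_ac)

lemma quad_form_rank_one: "quad_form (\<lambda>x y. g x * g y) F c = (\<Sum>x\<in>F. c x * g x)\<^sup>2"
  by (simp add: quad_form_def power2_eq_square sum_product mult_ac)

lemma quad_form_diff_rank_one:
  "quad_form (\<lambda>x y. k x y - g x * g y / a) F c = quad_form k F c - (\<Sum>x\<in>F. c x * g x)\<^sup>2 / a"
  by (simp add: quad_form_def power2_eq_square sum_product sum_subtractf sum_divide_distrib
      algebra_simps)

lemma quad_form_insert:
  assumes "finite F" "a \<notin> F" "\<And>x y. k x y = k y x"
  shows "quad_form k (insert a F) c
    = c a * c a * k a a + 2 * c a * (\<Sum>x\<in>F. c x * k x a) + quad_form k F c"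
  using assms
  by (simp add: quad_form_def sum.distrib sum_distrib_left algebra_simps)

lemma quad_form_image:
  assumes "finite F"
  shows "quad_form (\<lambda>p q. k (h p) (h q)) F d
    = quad_form k (h ` F) (\<lambda>b. \<Sum>p\<in>{p\<in>F. h p = b}. d p)"
proof -
  define e where "e b = (\<Sum>p\<in>{p\<in>F. h p = b}. d p)" for b
  have regroup: "(\<Sum>p\<in>F. d p * g (h p)) = (\<Sum>b\<in>h ` F. e b * g b)" for g :: "_ \<Rightarrow> real"
    by (subst sum.image_gen[OF assms]) (auto simp: e_def sum_distrib_right intro!: sum.cong)
  have "quad_form (\<lambda>p q. k (h p) (h q)) F d = (\<Sum>p\<in>F. d p * (\<Sum>q\<in>F. d q * k (h p) (h q)))"
    by (simp add: quad_form_def sum_distrib_left mult.assoc)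
  also have "\<dots> = (\<Sum>b\<in>h ` F. e b * (\<Sum>b'\<in>h ` F. e b' * k b b'))"
    by (simp only: regroup) (rule regroup)
  also have "\<dots> = quad_form k (h ` F) e"
    by (simp add: quad_form_def sum_distrib_left mult.assoc)
  finally show ?thesis unfolding e_def .
qed

lemma quad_form_features:
  "quad_form (\<lambda>p q. (\<Sum>r<n. \<phi> r p * \<phi> r q) * g p q) F c
    = (\<Sum>r<n. quad_form g F (\<lambda>p. c p * \<phi> r p))"
proof -
  have "quad_form (\<lambda>p q. (\<Sum>r<n. \<phi> r p * \<phi> r q) * g p q) F c
      = (\<Sum>p\<in>F. \<Sum>q\<in>F. \<Sum>r<n. (c p * \<phi> r p) * (c q * \<phi> r q) * g p q)"
    unfolding quad_form_def
    by (intro sum.cong refl) (simp add: sum_distrib_left sum_distrib_right mult_ac)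
  also have "\<dots> = (\<Sum>r<n. \<Sum>p\<in>F. \<Sum>q\<in>F. (c p * \<phi> r p) * (c q * \<phi> r q) * g p q)"
    by (simp add: sum.swap[where A = "{..<n}"])
  finally show ?thesis by (simp add: quad_form_def)
qed

lemma integrable_quad_form:
  assumes "\<And>x y. x \<in> F \<Longrightarrow> y \<in> F \<Longrightarrow> integrable M (K x y)"
  shows "integrable M (\<lambda>u. quad_form (\<lambda>x y. K x y u) F c)"
  unfolding quad_form_def using assms
  by (intro Bochner_Integration.integrable_sum Bochner_Integration.integrable_mult_right) auto

lemma integral_quad_form:
  assumes "\<And>x y. x \<in> F \<Longrightarrow> y \<in> F \<Longrightarrow> integrable M (K x y)"
  shows "(\<integral>u. quad_form (\<lambda>x y. K x y u) F c \<partial>M) = quad_form (\<lambda>x y. \<integral>u. K x y u \<partial>M) F c"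
proof -
  have "(\<integral>u. (\<Sum>y\<in>F. c x * c y * K x y u) \<partial>M) = (\<Sum>y\<in>F. c x * c y * (\<integral>u. K x y u \<partial>M))"
    if "x \<in> F" for x
    using assms that by (subst Bochner_Integration.integral_sum) auto
  then show ?thesis
    unfolding quad_form_def using assms
    by (subst Bochner_Integration.integral_sum) auto
qed

section \<open>Strictly positive definite kernels\<close>

definition spd_kernel :: "('a \<Rightarrow> 'a \<Rightarrow> real) \<Rightarrow> 'a set \<Rightarrow> bool" where
  "spd_kernel k S \<longleftrightarrow> (\<forall>F c. finite F \<and> F \<subseteq> S \<longrightarrow>
      0 \<le> quad_form k F c \<and> (quad_form k F c = 0 \<longrightarrow> (\<forall>x\<in>F. c x = 0)))"

lemma spd_kernelD:
  assumes "spd_kernel k S" "finite F" "F \<subseteq> S"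
  shows spd_kernel_nonneg: "0 \<le> quad_form k F c"
    and spd_kernel_eq_0: "quad_form k F c = 0 \<Longrightarrow> x \<in> F \<Longrightarrow> c x = 0"
  using assms unfolding spd_kernel_def by blast+

lemma spd_kernel_cong:
  assumes "spd_kernel k S" "\<And>x y. x \<in> S \<Longrightarrow> y \<in> S \<Longrightarrow> k x y = k' x y"
  shows "spd_kernel k' S"
proof -
  have "quad_form k F c = quad_form k' F c" if "F \<subseteq> S" for F c
    unfolding quad_form_def using that assms(2) by (intro sum.cong refl) auto
  then show ?thesis using assms(1) unfolding spd_kernel_def by simp
qed

lemma spd_kernel_diag_pos:
  assumes "spd_kernel k S" "a \<in> S"
  shows "k a a > 0"
proof -
  have "0 \<le> quad_form k {a} (\<lambda>_. 1)" "quad_form k {a} (\<lambda>_. 1) \<noteq> 0"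
    using spd_kernelD[OF assms(1), of "{a}" "\<lambda>_. 1"] assms(2) by auto
  then show ?thesis by simp
qed

lemma spd_kernel_pullbackD:
  assumes "spd_kernel k S" "finite F" "h ` F \<subseteq> S"
  shows quad_form_pullback_nonneg: "0 \<le> quad_form (\<lambda>p q. k (h p) (h q)) F d"
    and quad_form_pullback_eq_0: "quad_form (\<lambda>p q. k (h p) (h q)) F d = 0 \<Longrightarrow> b \<in> h ` F \<Longrightarrow>
      (\<Sum>p\<in>{p\<in>F. h p = b}. d p) = 0"
  using spd_kernelD[OF assms(1) finite_imageI[OF assms(2)] assms(3)]
  unfolding quad_form_image[OF assms(2)] by blast+

lemma spd_kernel_comp:
  assumes "spd_kernel k T" "inj_on h S" "h ` S \<subseteq> T"
  shows "spd_kernel (\<lambda>x y. k (h x) (h y)) S"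
  unfolding spd_kernel_def
proof (intro allI impI conjI ballI)
  fix F c assume F: "finite F \<and> F \<subseteq> S"
  then have hF: "h ` F \<subseteq> T" using assms(3) by auto
  show "0 \<le> quad_form (\<lambda>x y. k (h x) (h y)) F c"
    using quad_form_pullback_nonneg[OF assms(1) _ hF] F by blast
  fix x assume "quad_form (\<lambda>x y. k (h x) (h y)) F c = 0" "x \<in> F"
  moreover have "{p \<in> F. h p = h x} = {x}"
    using \<open>x \<in> F\<close> F assms(2) by (auto simp: inj_on_def)
  ultimately show "c x = 0"
    using quad_form_pullback_eq_0[OF assms(1) _ hF, of c "h x"] F by simp
qed

lemma spd_kernel_schur_complement:
  assumes spd: "spd_kernel k S" and "a \<in> S" and sym: "\<And>x y. k x y = k y x"
  shows "spd_kernel (\<lambda>x y. k x y - k x a * k y a / k a a) (S - {a})"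
  unfolding spd_kernel_def
proof (intro allI impI)
  fix F c assume F: "finite F \<and> F \<subseteq> S - {a}"
  have pos: "k a a > 0" using spd_kernel_diag_pos[OF spd \<open>a \<in> S\<close>] .
  define \<sigma> where "\<sigma> = (\<Sum>x\<in>F. c x * k x a)"
  define c' where "c' = c(a := - \<sigma> / k a a)"
  have "a \<notin> F" and sub: "insert a F \<subseteq> S" using F \<open>a \<in> S\<close> by auto
  then have c'_F: "c' x = c x" if "x \<in> F" for x
    using that unfolding c'_def by auto
  have "(\<Sum>x\<in>F. c' x * k x a) = \<sigma>"
    unfolding \<sigma>_def using c'_F by (intro sum.cong) auto
  then have "quad_form k (insert a F) c' = c' a * c' a * k a a + 2 * c' a * \<sigma> + quad_form k F c"
    using quad_form_insert[OF _ \<open>a \<notin> F\<close> sym, where c=c'] quad_form_cong[where c=c' and c'=c and F=F]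
      F c'_F
    by simp
  also have "\<dots> = quad_form k F c - \<sigma>\<^sup>2 / k a a"
    using pos by (simp add: c'_def power2_eq_square field_simps)
  also have "\<dots> = quad_form (\<lambda>x y. k x y - k x a * k y a / k a a) F c"
    unfolding quad_form_diff_rank_one \<sigma>_def ..
  finally have eq:
    "quad_form k (insert a F) c' = quad_form (\<lambda>x y. k x y - k x a * k y a / k a a) F c" .
  show "0 \<le> quad_form (\<lambda>x y. k x y - k x a * k y a / k a a) F c \<and>
      (quad_form (\<lambda>x y. k x y - k x a * k y a / k a a) F c = 0 \<longrightarrow> (\<forall>x\<in>F. c x = 0))"
    using spd_kernelD[OF spd _ sub, of c'] F c'_F unfolding eq by auto
qed

lemma spd_kernel_finite_features:
  assumes "spd_kernel k S" "finite P" "P \<subseteq> S" "\<And>x y. k x y = k y x"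
  shows "\<exists>(n::nat) \<phi>. \<forall>x\<in>P. \<forall>y\<in>P. k x y = (\<Sum>r<n. \<phi> r x * \<phi> r y)"
  using assms(2,1,3,4)
proof (induction P arbitrary: k S rule: finite_induct)
  case empty
  then show ?case by auto
next
  case (insert a P)
  have pos: "k a a > 0" using spd_kernel_diag_pos[OF insert.prems(1)] insert.prems(2) by simp
  define k' where "k' x y = k x y - k x a * k y a / k a a" for x y
  have "spd_kernel k' (S - {a})"
    unfolding k'_def using insert.prems by (intro spd_kernel_schur_complement) auto
  moreover have "P \<subseteq> S - {a}"
    using insert.prems(2) insert.hyps(2) by auto
  moreover have "k' x y = k' y x" for x y
    unfolding k'_def using insert.prems(3)[of x y] by (simp add: mult.commute)
  ultimately have "\<exists>(n::nat) \<phi>. \<forall>x\<in>P. \<forall>y\<in>P. k' x y = (\<Sum>r<n. \<phi> r x * \<phi> r y)"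
    by (rule insert.IH)
  then obtain n :: nat and \<phi> where \<phi>: "\<forall>x\<in>P. \<forall>y\<in>P. k' x y = (\<Sum>r<n. \<phi> r x * \<phi> r y)"
    by blast
  \<comment> \<open>A Cholesky step: besides the Schur complement only the feature k x a / sqrt (k a a) remains.\<close>
  define \<psi> where
    "\<psi> r x = (if r < n then (if x = a then 0 else \<phi> r x) else k x a / sqrt (k a a))" for r x
  have "k x y = (\<Sum>r<Suc n. \<psi> r x * \<psi> r y)" if "x \<in> insert a P" "y \<in> insert a P" for x y
  proof -
    have "\<psi> n x * \<psi> n y = k x a * k y a / (sqrt (k a a) * sqrt (k a a))"
      unfolding \<psi>_def by simp
    also have "sqrt (k a a) * sqrt (k a a) = k a a"
      using pos by simp
    finally have last: "\<psi> n x * \<psi> n y = k x a * k y a / k a a" .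
    have "(\<Sum>r<n. \<psi> r x * \<psi> r y) = k x y - k x a * k y a / k a a"
    proof (cases "x = a \<or> y = a")
      case True
      then have "(\<Sum>r<n. \<psi> r x * \<psi> r y) = 0"
        by (intro sum.neutral) (auto simp: \<psi>_def)
      moreover have "k x y = k x a * k y a / k a a"
        using True pos insert.prems(3)[of a y] by auto
      ultimately show ?thesis by simp
    next
      case False
      then show ?thesis using \<phi> that by (simp add: \<psi>_def k'_def)
    qed
    then show ?thesis using last by simp
  qed
  then show ?case by blast
qed

lemma spd_kernel_times:
  assumes spd1: "spd_kernel k1 S1" and spd2: "spd_kernel k2 S2" and sym1: "\<And>x y. k1 x y = k1 y x"
  shows "spd_kernel (\<lambda>p q. k1 (fst p) (fst q) * k2 (snd p) (snd q)) (S1 \<times> S2)"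
  unfolding spd_kernel_def
proof (intro allI impI conjI ballI)
  fix F c assume F: "finite F \<and> F \<subseteq> S1 \<times> S2"
  then have fin: "finite F" and sub: "fst ` F \<subseteq> S1" "snd ` F \<subseteq> S2" by auto
  obtain n :: nat and \<phi> where \<phi>: "\<forall>a\<in>fst ` F. \<forall>b\<in>fst ` F. k1 a b = (\<Sum>r<n. \<phi> r a * \<phi> r b)"
    using spd_kernel_finite_features[OF spd1 finite_imageI[OF fin] sub(1) sym1] by blast
  \<comment> \<open>Expanding k1 in features makes the form a sum of k2-forms; if it vanishes, so does the
    k1-form on every fibre of snd.\<close>
  define Q where "Q r = quad_form (\<lambda>p q. k2 (snd p) (snd q)) F (\<lambda>p. c p * \<phi> r (fst p))" for r
  have "quad_form (\<lambda>p q. k1 (fst p) (fst q) * k2 (snd p) (snd q)) F c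
      = quad_form (\<lambda>p q. (\<Sum>r<n. \<phi> r (fst p) * \<phi> r (fst q)) * k2 (snd p) (snd q)) F c"
    unfolding quad_form_def using \<phi> by (intro sum.cong refl) auto
  also have "\<dots> = (\<Sum>r<n. Q r)"
    unfolding quad_form_features Q_def ..
  finally have split:
    "quad_form (\<lambda>p q. k1 (fst p) (fst q) * k2 (snd p) (snd q)) F c = (\<Sum>r<n. Q r)" .
  have Q_nonneg: "0 \<le> Q r" for r
    unfolding Q_def by (rule quad_form_pullback_nonneg[OF spd2 fin sub(2)])
  show "0 \<le> quad_form (\<lambda>p q. k1 (fst p) (fst q) * k2 (snd p) (snd q)) F c"
    unfolding split by (rule sum_nonneg) (rule Q_nonneg)
  fix x assume "quad_form (\<lambda>p q. k1 (fst p) (fst q) * k2 (snd p) (snd q)) F c = 0" and x: "x \<in> F"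
  then have Q_0: "Q r = 0" if "r < n" for r
    using that Q_nonneg unfolding split by (subst (asm) sum_nonneg_eq_0_iff) auto
  define Fx where "Fx = {p\<in>F. snd p = snd x}"
  have "(\<Sum>p\<in>Fx. c p * \<phi> r (fst p)) = 0" if "r < n" for r
    using quad_form_pullback_eq_0[OF spd2 fin sub(2) Q_0[OF that, unfolded Q_def]] that x
    unfolding Fx_def by auto
  moreover have "quad_form (\<lambda>p q. k1 (fst p) (fst q)) Fx c
      = quad_form (\<lambda>p q. (\<Sum>r<n. \<phi> r (fst p) * \<phi> r (fst q)) * 1) Fx c"
    unfolding quad_form_def Fx_def using \<phi> by (intro sum.cong refl) auto
  ultimately have "quad_form (\<lambda>p q. k1 (fst p) (fst q)) Fx c = 0"
    unfolding quad_form_features by simp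
  moreover have "{p\<in>Fx. fst p = fst x} = {x}"
    using x unfolding Fx_def by (auto simp: prod_eq_iff)
  ultimately show "c x = 0"
    using quad_form_pullback_eq_0[OF spd1, of Fx fst c "fst x"] fin sub(1) x
    unfolding Fx_def by auto
qed

lemma spd_kernel_prod:
  assumes "finite I" "\<And>i. i \<in> I \<Longrightarrow> spd_kernel (k i) (S i)" "\<And>i x y. k i x y = k i y x"
  shows "spd_kernel (\<lambda>f g. \<Prod>i\<in>I. k i (f i) (g i)) (Pi\<^sub>E I S)"
  using assms
proof (induction I rule: finite_induct)
  case empty
  show ?case
    unfolding spd_kernel_def by (auto simp: subset_singleton_iff quad_form_def)
next
  case (insert j I)
  define h where "h f = (restrict f I, f j)" for f :: "'a \<Rightarrow> 'b"
  have "spd_kernel (\<lambda>p q. (\<Prod>i\<in>I. k i (fst p i) (fst q i)) * k j (snd p) (snd q)) (Pi\<^sub>E I S \<times> S j)"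
    using insert.prems insert.IH by (intro spd_kernel_times) (auto intro: prod.cong)
  moreover have "inj_on h (Pi\<^sub>E (insert j I) S)"
    by (auto simp: h_def inj_on_def PiE_def extensional_def fun_eq_iff) metis
  moreover have "h ` Pi\<^sub>E (insert j I) S \<subseteq> Pi\<^sub>E I S \<times> S j"
    by (auto simp: h_def)
  ultimately have "spd_kernel
      (\<lambda>f g. (\<Prod>i\<in>I. k i (fst (h f) i) (fst (h g) i)) * k j (snd (h f)) (snd (h g)))
      (Pi\<^sub>E (insert j I) S)"
    by (rule spd_kernel_comp)
  then show ?case
    by (rule spd_kernel_cong) (simp add: h_def insert.hyps mult.commute cong: prod.cong)
qed

section \<open>Gaussian variograms\<close>

lemma sum_mult_power_eq_0_imp_eq_0:
  fixes d :: "'a::idom \<Rightarrow> 'a"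
  assumes "finite F" "\<And>n. (\<Sum>s\<in>F. d s * s ^ n) = 0"
  shows "\<forall>s\<in>F. d s = 0"
  using assms
proof (induction F arbitrary: d rule: finite_induct)
  case empty
  then show ?case by simp
next
  case (insert t F)
  have "(\<Sum>s\<in>F. d s * (s - t) * s ^ n) = 0" for n
  proof -
    have "(\<Sum>s\<in>F. d s * (s - t) * s ^ n) = (\<Sum>s\<in>insert t F. d s * (s - t) * s ^ n)"
      using insert.hyps by simp
    also have "\<dots> = (\<Sum>s\<in>insert t F. d s * s ^ Suc n) - t * (\<Sum>s\<in>insert t F. d s * s ^ n)"
      by (simp add: sum_distrib_left sum_subtractf algebra_simps)
    also have "\<dots> = 0"
      using insert.prems[of n] insert.prems[of "Suc n"] by simp
    finally show ?thesis .
  qed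
  then have "\<forall>s\<in>F. d s * (s - t) = 0"
    by (rule insert.IH)
  then have F0: "\<forall>s\<in>F. d s = 0"
    using insert.hyps(2) by auto
  then have "d t = (\<Sum>s\<in>insert t F. d s * s ^ 0)"
    using insert.hyps by simp
  with F0 insert.prems[of 0] show ?case by simp
qed

lemma exp_minus_one_sums: "(\<lambda>n. x ^ Suc n / fact (Suc n)) sums (exp x - 1 :: real)"
proof -
  have "(\<lambda>n. x ^ n / fact n) sums exp x"
    using exp_converges[of x] by (simp add: divide_inverse_commute scaleR_conv_of_real)
  then show ?thesis
    by (subst sums_Suc_iff) simp
qed

lemma spd_kernel_exp_mult_minus_one:
  assumes "u > 0"
  shows "spd_kernel (\<lambda>s t. exp (u * s * t) - 1) {s::real. s \<noteq> 0}"
  unfolding spd_kernel_def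
proof (intro allI impI conjI ballI)
  fix F c assume F: "finite F \<and> F \<subseteq> {s::real. s \<noteq> 0}"
  \<comment> \<open>The exponential series turns the form into the sum over n of a n * (P n)^2.\<close>
  define a where "a n = u ^ Suc n / fact (Suc n)" for n
  define P where "P n = (\<Sum>s\<in>F. c s * s * s ^ n)" for n
  have a_pos: "a n > 0" for n
    unfolding a_def using assms by simp
  have "(\<lambda>n. \<Sum>s\<in>F. \<Sum>t\<in>F. c s * c t * ((u * s * t) ^ Suc n / fact (Suc n)))
      sums quad_form (\<lambda>s t. exp (u * s * t) - 1) F c"
    unfolding quad_form_def by (intro sums_sum sums_mult exp_minus_one_sums)
  moreover have "(\<Sum>s\<in>F. \<Sum>t\<in>F. c s * c t * ((u * s * t) ^ Suc n / fact (Suc n))) = a n * (P n)\<^sup>2"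
    for n
  proof -
    have "c s * c t * ((u * s * t) ^ Suc n / fact (Suc n))
        = a n * ((c s * s * s ^ n) * (c t * t * t ^ n))" for s t
      by (simp add: a_def power_mult_distrib)
    then show ?thesis
      unfolding P_def power2_eq_square sum_product by (simp add: sum_distrib_left)
  qed
  ultimately have sums: "(\<lambda>n. a n * (P n)\<^sup>2) sums quad_form (\<lambda>s t. exp (u * s * t) - 1) F c"
    by simp
  have terms_nonneg: "0 \<le> a n * (P n)\<^sup>2" for n
    using a_pos[of n] by simp
  show "0 \<le> quad_form (\<lambda>s t. exp (u * s * t) - 1) F c"
    using sums suminf_nonneg[of "\<lambda>n. a n * (P n)\<^sup>2"] terms_nonneg by (simp add: sums_iff)
  fix s assume "quad_form (\<lambda>s t. exp (u * s * t) - 1) F c = 0" and s: "s \<in> F"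
  then have "suminf (\<lambda>n. a n * (P n)\<^sup>2) = 0" and "summable (\<lambda>n. a n * (P n)\<^sup>2)"
    using sums by (auto simp: sums_iff)
  then have "a n * (P n)\<^sup>2 = 0" for n
    using suminf_eq_zero_iff terms_nonneg by blast
  then have "P n = 0" for n
    using a_pos[of n] by (metis less_irrefl mult_eq_0_iff zero_eq_power2)
  then have "\<forall>s\<in>F. c s * s = 0"
    using F by (intro sum_mult_power_eq_0_imp_eq_0) (auto simp: P_def)
  then show "c s = 0"
    using s F by auto
qed

definition gauss_variogram_cov :: "real \<Rightarrow> real \<Rightarrow> real \<Rightarrow> real" where
  "gauss_variogram_cov u s t = 1 - exp (- (u * s\<^sup>2)) - exp (- (u * t\<^sup>2)) + exp (- (u * (s - t)\<^sup>2))"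

lemma spd_kernel_gauss_variogram_cov:
  assumes "u > 0"
  shows "spd_kernel (gauss_variogram_cov u) {s. s \<noteq> 0}"
  unfolding spd_kernel_def
proof (intro allI impI conjI ballI)
  fix F c assume F: "finite F \<and> F \<subseteq> {s::real. s \<noteq> 0}"
  define E where "E s = exp (- (u * s\<^sup>2))" for s
  have "gauss_variogram_cov u = (\<lambda>s t. (1 - E s) * (1 - E t) + E s * E t * (exp (2 * u * s * t) - 1))"
    by (simp add: fun_eq_iff gauss_variogram_cov_def E_def algebra_simps power2_eq_square
        flip: exp_add)
  then have split: "quad_form (gauss_variogram_cov u) F c
      = (\<Sum>s\<in>F. c s * (1 - E s))\<^sup>2 + quad_form (\<lambda>s t. exp (2 * u * s * t) - 1) F (\<lambda>s. c s * E s)"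
    by (simp add: quad_form_add quad_form_rank_one quad_form_scale)
  have spd: "spd_kernel (\<lambda>s t. exp (2 * u * s * t) - 1) {s::real. s \<noteq> 0}"
    using spd_kernel_exp_mult_minus_one[of "2 * u"] assms by simp
  note spd_nonneg = spd_kernel_nonneg[OF spd, of F "\<lambda>s. c s * E s"]
  show "0 \<le> quad_form (gauss_variogram_cov u) F c"
    unfolding split using spd_nonneg F by simp
  fix s assume "quad_form (gauss_variogram_cov u) F c = 0" and s: "s \<in> F"
  then have "quad_form (\<lambda>s t. exp (2 * u * s * t) - 1) F (\<lambda>s. c s * E s) = 0"
    unfolding split using spd_nonneg F by (smt (verit) zero_le_power2)
  then have "c s * E s = 0"
    using spd_kernel_eq_0[OF spd, of F "\<lambda>s. c s * E s" s] F s by blast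
  then show "c s = 0"
    by (simp add: E_def)
qed

section \<open>Fractional powers as mixtures of exponentials\<close>

lemma AE_lborel_imp_ex_pos:
  assumes "AE u in lborel. P u"
  shows "\<exists>u>0. P (u::real)"
proof (rule ccontr)
  assume "\<not> (\<exists>u>0. P u)"
  then have "AE u in lborel. u \<notin> {0<..<1::real}"
    using assms by auto
  then have "emeasure lborel {0<..<1::real} = 0"
    by (subst (asm) AE_iff_measurable[of "{0<..<1::real}"]) auto
  then show False by simp
qed

lemma integrable_lborel_if_integrable_on:
  fixes f :: "real \<Rightarrow> real"
  assumes "f \<in> borel_measurable borel" "\<And>x. 0 \<le> f x" "f integrable_on UNIV"
  shows "integrable lborel f"
proof -
  obtain I where "(f has_integral I) UNIV"
    using assms(3) by (auto simp: integrable_on_def)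
  then have "integral\<^sup>N lborel f = I"
    by (rule nn_integral_has_integral_lborel[OF assms(1,2)])
  then show ?thesis
    using assms(1,2) by (intro integrableI_nonneg) auto
qed

lemma integrable_lborel_indicator_powr:
  fixes A :: "real set"
  assumes "A \<in> sets borel" "(\<lambda>x. x powr a) integrable_on A" "A \<subseteq> {0<..}"
  shows "integrable lborel (\<lambda>x. indicator A x * x powr a)"
proof (rule integrable_lborel_if_integrable_on)
  have "(\<lambda>x. if x \<in> A then x powr a else 0) integrable_on UNIV"
    using assms(2) by (subst integrable_restrict_UNIV)
  moreover have "(\<lambda>x. indicator A x * x powr a) = (\<lambda>x. if x \<in> A then x powr a else 0)"
    by (auto simp: indicator_def)
  ultimately show "(\<lambda>x. indicator A x * x powr a) integrable_on UNIV"
    by simp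
qed (use assms(1) in \<open>auto simp: indicator_def\<close>)

text \<open>Substituting u := u / l shows that the integral of this function is l powr \<beta> times a
  positive constant, which writes l powr \<beta> as a mixture of the functions 1 - exp (- l u).\<close>

definition frac_power_integrand :: "real \<Rightarrow> real \<Rightarrow> real \<Rightarrow> real" where
  "frac_power_integrand \<beta> l u = indicator {0<..} u * (1 - exp (- (l * u))) * u powr (- 1 - \<beta>)"

lemma borel_measurable_frac_power_integrand [measurable]:
  "frac_power_integrand \<beta> l \<in> borel_measurable borel"
  unfolding frac_power_integrand_def by measurable

lemma frac_power_integrand_nonneg: "0 \<le> l \<Longrightarrow> 0 \<le> frac_power_integrand \<beta> l u"
  unfolding frac_power_integrand_def by (auto simp: indicator_def)

lemma frac_power_integrand_pos: "0 < l \<Longrightarrow> 0 < u \<Longrightarrow> 0 < frac_power_integrand \<beta> l u"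
  unfolding frac_power_integrand_def by simp

lemma frac_power_integrand_one_le:
  "frac_power_integrand \<beta> 1 u
    \<le> indicator {0<..1} u * u powr (- \<beta>) + indicator {1..} u * u powr (- 1 - \<beta>)"
proof (cases "u > 0")
  case True
  have "1 - exp (- u) \<le> min u 1"
    using exp_ge_add_one_self[of "- u"] by simp
  then have "frac_power_integrand \<beta> 1 u \<le> min u 1 * u powr (- 1 - \<beta>)"
    using True by (simp add: frac_power_integrand_def mult_right_mono)
  also have "\<dots> \<le> indicator {0<..1} u * u powr (- \<beta>) + indicator {1..} u * u powr (- 1 - \<beta>)"
    using True by (auto simp: indicator_def min_def powr_mult_base)
  finally show ?thesis .
qed (simp add: frac_power_integrand_def indicator_def)

lemma integrable_frac_power_integrand_one:
  assumes "0 < \<beta>" "\<beta> < 1"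
  shows "integrable lborel (frac_power_integrand \<beta> 1)"
proof (rule Bochner_Integration.integrable_bound[OF Bochner_Integration.integrable_add])
  show "integrable lborel (\<lambda>u. indicator {0<..1} u * u powr (- \<beta>))"
    using assms by (intro integrable_lborel_indicator_powr integrable_on_powr_from_0') auto
  have "(\<lambda>u. u powr (- 1 - \<beta>)) integrable_on {1..}"
    using has_integral_powr_to_inf[of "- 1 - \<beta>" 1] assms by (auto simp: integrable_on_def)
  then show "integrable lborel (\<lambda>u. indicator {1..} u * u powr (- 1 - \<beta>))"
    by (intro integrable_lborel_indicator_powr) auto
  show "AE u in lborel. norm (frac_power_integrand \<beta> 1 u)
      \<le> norm (indicator {0<..1} u * u powr (- \<beta>) + indicator {1..} u * u powr (- 1 - \<beta>))"
    using frac_power_integrand_one_le frac_power_integrand_nonneg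
    by (intro AE_I2) (smt (verit) real_norm_def)
qed simp

lemma frac_power_integrand_rescale:
  assumes "0 < l"
  shows "frac_power_integrand \<beta> l (x / l) = l powr (1 + \<beta>) * frac_power_integrand \<beta> 1 x"
proof (cases "x > 0")
  case True
  have "(x / l) powr (- 1 - \<beta>) = l powr (1 + \<beta>) * x powr (- 1 - \<beta>)"
    using assms True by (simp add: powr_divide powr_minus_divide powr_diff powr_add divide_simps)
  then show ?thesis
    using assms True by (simp add: frac_power_integrand_def)
next
  case False
  then show ?thesis
    using assms by (simp add: frac_power_integrand_def indicator_def zero_less_divide_iff)
qed

lemma frac_power_integrand_zero [simp]: "frac_power_integrand \<beta> 0 = (\<lambda>_. 0)"
  by (simp add: frac_power_integrand_def fun_eq_iff)

lemma integrable_frac_power_integrand: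
  assumes "0 < \<beta>" "\<beta> < 1" "0 \<le> l"
  shows "integrable lborel (frac_power_integrand \<beta> l)"
proof (cases "l = 0")
  case False
  with assms have "0 < l" by simp
  moreover have "integrable lborel (\<lambda>x. l powr (1 + \<beta>) * frac_power_integrand \<beta> 1 x)"
    using integrable_frac_power_integrand_one assms by simp
  ultimately show ?thesis
    using lborel_integrable_real_affine_iff[of "1 / l" "frac_power_integrand \<beta> l" 0]
    by (simp add: frac_power_integrand_rescale)
qed simp

lemma integral_frac_power_integrand:
  assumes "0 \<le> l"
  shows "integral\<^sup>L lborel (frac_power_integrand \<beta> l)
    = l powr \<beta> * integral\<^sup>L lborel (frac_power_integrand \<beta> 1)"
proof (cases "l = 0")
  case False
  with assms have l: "0 < l" by simp
  then have "integral\<^sup>L lborel (frac_power_integrand \<beta> l)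
      = 1 / l * (\<integral>x. l powr (1 + \<beta>) * frac_power_integrand \<beta> 1 x \<partial>lborel)"
    using lborel_integral_real_affine[of "1 / l" "frac_power_integrand \<beta> l" 0]
    by (simp add: frac_power_integrand_rescale)
  then show ?thesis
    using l by (simp add: powr_add)
qed simp

lemma integral_frac_power_integrand_one_pos:
  assumes "0 < \<beta>" "\<beta> < 1"
  shows "integral\<^sup>L lborel (frac_power_integrand \<beta> 1) > 0"
proof -
  have int: "integrable lborel (frac_power_integrand \<beta> 1)"
    using integrable_frac_power_integrand_one assms by blast
  have "integral\<^sup>L lborel (frac_power_integrand \<beta> 1) \<noteq> 0"
  proof
    assume "integral\<^sup>L lborel (frac_power_integrand \<beta> 1) = 0"
    then have "AE u in lborel. frac_power_integrand \<beta> 1 u = 0"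
      using integral_nonneg_eq_0_iff_AE[OF int] by (simp add: frac_power_integrand_nonneg)
    then obtain u where "u > 0" "frac_power_integrand \<beta> 1 u = 0"
      using AE_lborel_imp_ex_pos by blast
    then show False
      using frac_power_integrand_pos[of 1 u \<beta>] by simp
  qed
  moreover have "0 \<le> integral\<^sup>L lborel (frac_power_integrand \<beta> 1)"
    by (simp add: frac_power_integrand_nonneg)
  ultimately show ?thesis by simp
qed

lemma abs_powr_eq_integral_frac_power_integrand:
  assumes "0 < H" "H < 1"
  shows "\<bar>s\<bar> powr (2 * H)
    = integral\<^sup>L lborel (frac_power_integrand H (s\<^sup>2))
      / integral\<^sup>L lborel (frac_power_integrand H 1)"
proof -
  have "\<bar>s\<bar> powr (2 * H) = (\<bar>s\<bar> powr 2) powr H"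
    by (rule powr_powr[symmetric])
  also have "\<bar>s\<bar> powr 2 = s\<^sup>2"
    by (cases "s = 0") (simp_all add: powr_realpow)
  finally have "\<bar>s\<bar> powr (2 * H) = (s\<^sup>2) powr H" .
  then show ?thesis
    using integral_frac_power_integrand[of "s\<^sup>2" H] integral_frac_power_integrand_one_pos[OF assms]
    by simp
qed

section \<open>Covariance of the fractional Brownian sheet\<close>

definition fbm_cov :: "real \<Rightarrow> real \<Rightarrow> real \<Rightarrow> real" where
  "fbm_cov H s t = 1/2 * (\<bar>s\<bar> powr (2 * H) + \<bar>t\<bar> powr (2 * H) - \<bar>s - t\<bar> powr (2 * H))"

lemma spd_kernel_fbm_cov:
  assumes "0 < H" "H < 1"
  shows "spd_kernel (fbm_cov H) {s. s \<noteq> 0}"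
  unfolding spd_kernel_def
proof (intro allI impI conjI ballI)
  fix F c assume F: "finite F \<and> F \<subseteq> {s::real. s \<noteq> 0}"
  define I where "I = integral\<^sup>L lborel (frac_power_integrand H 1)"
  define K where "K s t u = frac_power_integrand H (s\<^sup>2) u + frac_power_integrand H (t\<^sup>2) u
    - frac_power_integrand H ((s - t)\<^sup>2) u" for s t u
  define G where "G u = quad_form (\<lambda>s t. K s t u) F c" for u
  have I_pos: "0 < I"
    unfolding I_def using integral_frac_power_integrand_one_pos assms by blast
  have int: "integrable lborel (frac_power_integrand H (s\<^sup>2))" for s
    using integrable_frac_power_integrand assms by simp
  then have int_K: "integrable lborel (K s t)" for s t
    unfolding K_def
    by (intro Bochner_Integration.integrable_add Bochner_Integration.integrable_diff)
  have fbm_cov_eq: "fbm_cov H = (\<lambda>s t. inverse (2 * I) * (\<integral>u. K s t u \<partial>lborel))"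
    using I_pos int
    unfolding fbm_cov_def K_def I_def abs_powr_eq_integral_frac_power_integrand[OF assms]
    by (simp add: fun_eq_iff field_simps)
  have Q: "quad_form (fbm_cov H) F c = inverse (2 * I) * (\<integral>u. G u \<partial>lborel)"
    unfolding fbm_cov_eq quad_form_cmult G_def integral_quad_form[OF int_K] ..
  have G_eq: "G u = indicator {0<..} u * u powr (- 1 - H) * quad_form (gauss_variogram_cov u) F c"
    for u
  proof -
    have "K s t u = indicator {0<..} u * u powr (- 1 - H) * gauss_variogram_cov u s t" for s t
      by (simp add: K_def gauss_variogram_cov_def frac_power_integrand_def algebra_simps)
    then show ?thesis
      unfolding G_def by (simp add: quad_form_cmult)
  qed
  have G_nonneg: "0 \<le> G u" for u
    using spd_kernel_nonneg[OF spd_kernel_gauss_variogram_cov, of u F c] F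
    by (cases "u > 0") (simp_all add: G_eq)
  show "0 \<le> quad_form (fbm_cov H) F c"
    unfolding Q using I_pos G_nonneg by simp
  fix s assume "quad_form (fbm_cov H) F c = 0" and s: "s \<in> F"
  then have "(\<integral>u. G u \<partial>lborel) = 0"
    unfolding Q using I_pos by simp
  moreover have "integrable lborel G"
    unfolding G_def using int_K by (rule integrable_quad_form)
  ultimately have "AE u in lborel. G u = 0"
    using integral_nonneg_eq_0_iff_AE G_nonneg by blast
  then obtain u where u: "u > 0" "G u = 0"
    using AE_lborel_imp_ex_pos by blast
  then have "quad_form (gauss_variogram_cov u) F c = 0"
    by (simp add: G_eq)
  then show "c s = 0"
    using spd_kernel_eq_0[OF spd_kernel_gauss_variogram_cov[OF \<open>u > 0\<close>]] F s by blast
qed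

lemma spd_kernel_fbs_cov:
  assumes "\<forall>i. 0 < H $ i \<and> H $ i < 1"
  shows "spd_kernel (fbs_cov H) {x :: real^'n. \<forall>i. x $ i \<noteq> 0}"
proof -
  have "spd_kernel (\<lambda>f g. \<Prod>i\<in>UNIV. fbm_cov (H $ i) (f i) (g i)) (Pi\<^sub>E UNIV (\<lambda>_. {s. s \<noteq> 0}))"
    using assms
    by (intro spd_kernel_prod spd_kernel_fbm_cov) (auto simp: fbm_cov_def abs_minus_commute)
  moreover have "inj_on vec_nth {x :: real^'n. \<forall>i. x $ i \<noteq> 0}"
    by (auto simp: inj_on_def vec_eq_iff)
  moreover have "vec_nth ` {x :: real^'n. \<forall>i. x $ i \<noteq> 0} \<subseteq> Pi\<^sub>E UNIV (\<lambda>_. {s. s \<noteq> 0})"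
    by auto
  ultimately have
    "spd_kernel (\<lambda>x y. \<Prod>i\<in>UNIV. fbm_cov (H $ i) (x $ i) (y $ i)) {x :: real^'n. \<forall>i. x $ i \<noteq> 0}"
    by (rule spd_kernel_comp)
  moreover have "fbs_cov H = (\<lambda>x y. \<Prod>i\<in>UNIV. fbm_cov (H $ i) (x $ i) (y $ i))"
    by (simp add: fun_eq_iff fbs_cov_def fbm_cov_def)
  ultimately show ?thesis
    by simp
qed

section \<open>Linear independence\<close>

lemma abs_mult_le_sum_squares: "\<bar>a * b\<bar> \<le> a * a + b * (b::real)"
proof -
  have "2 * (\<bar>a\<bar> * \<bar>b\<bar>) \<le> a * a + b * b"
    using sum_squares_bound[of "\<bar>a\<bar>" "\<bar>b\<bar>"] by (simp add: power2_eq_square mult.assoc)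
  moreover have "0 \<le> \<bar>a\<bar> * \<bar>b\<bar>"
    by simp
  ultimately show ?thesis
    unfolding abs_mult by linarith
qed

lemma spd_second_moments_imp_coeff_eq_0:
  fixes X :: "'i \<Rightarrow> 'a \<Rightarrow> real"
  assumes "finite I" and spd: "spd_kernel (\<lambda>k l. \<integral>\<omega>. X k \<omega> * X l \<omega> \<partial>M) I"
    and meas: "\<And>k. k \<in> I \<Longrightarrow> X k \<in> borel_measurable M"
    and AE_0: "AE \<omega> in M. (\<Sum>k\<in>I. c k * X k \<omega>) = 0"
    and "k \<in> I"
  shows "c k = 0"
proof -
  have square_int: "integrable M (\<lambda>\<omega>. X k \<omega> * X k \<omega>)" if "k \<in> I" for k
  proof -
    have "(\<integral>\<omega>. X k \<omega> * X k \<omega> \<partial>M) \<noteq> 0"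
      using spd_kernel_diag_pos[OF spd that] by simp
    then show ?thesis
      using not_integrable_integral_eq by blast
  qed
  have int: "integrable M (\<lambda>\<omega>. X k \<omega> * X l \<omega>)" if "k \<in> I" "l \<in> I" for k l
  proof (rule Bochner_Integration.integrable_bound)
    show "integrable M (\<lambda>\<omega>. X k \<omega> * X k \<omega> + X l \<omega> * X l \<omega>)"
      using square_int that by simp
    show "AE \<omega> in M. norm (X k \<omega> * X l \<omega>) \<le> norm (X k \<omega> * X k \<omega> + X l \<omega> * X l \<omega>)"
    proof (intro AE_I2)
      fix \<omega>
      show "norm (X k \<omega> * X l \<omega>) \<le> norm (X k \<omega> * X k \<omega> + X l \<omega> * X l \<omega>)"
        using abs_mult_le_sum_squares[of "X k \<omega>" "X l \<omega>"] by simp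
    qed
  qed (use meas that in simp)
  have "quad_form (\<lambda>k l. \<integral>\<omega>. X k \<omega> * X l \<omega> \<partial>M) I c
      = (\<integral>\<omega>. quad_form (\<lambda>k l. X k \<omega> * X l \<omega>) I c \<partial>M)"
    using int by (simp add: integral_quad_form)
  also have "\<dots> = (\<integral>\<omega>. (\<Sum>k\<in>I. c k * X k \<omega>)\<^sup>2 \<partial>M)"
    by (simp add: quad_form_rank_one)
  also have "\<dots> = 0"
    using AE_0 by (intro integral_eq_zero_AE) auto
  finally show ?thesis
    using spd_kernel_eq_0[OF spd \<open>finite I\<close> order_refl] \<open>k \<in> I\<close> by blast
qed

lemma gaussian_family_measurable:
  assumes "gaussian_family M X I" "i \<in> I"
  shows "X i \<in> borel_measurable M"
proof -
  have "real_gaussian M (\<lambda>\<omega>. \<Sum>j\<in>{i}. 1 * X j \<omega>)"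
    using assms(1)[unfolded gaussian_family_def, rule_format, of "{i}" "\<lambda>_. 1"] assms(2) by simp
  then show ?thesis
    by (simp add: real_gaussian_def)
qed

lemma frac_brownian_sheet_measurable:
  assumes "frac_brownian_sheet M d H v" "x \<in> nonneg_orthant" "j < d"
  shows "(\<lambda>\<omega>. v \<omega> x j) \<in> borel_measurable M"
  using gaussian_family_measurable[of M "\<lambda>(x, j) \<omega>. v \<omega> x j" _ "(x, j)"] assms
  unfolding frac_brownian_sheet_def by auto

lemma frac_brownian_sheet_second_moment:
  assumes "frac_brownian_sheet M d H v" "x \<in> nonneg_orthant" "y \<in> nonneg_orthant" "j < d"
  shows "(\<integral>\<omega>. v \<omega> x j * v \<omega> y j \<partial>M) = fbs_cov H x y"
  using assms unfolding frac_brownian_sheet_def by auto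

theorem lemma5p3:
  fixes M :: "'a measure" and d :: nat and H :: "real^'n"
    and v :: "'a \<Rightarrow> real^'n \<Rightarrow> nat \<Rightarrow> real"
    and m :: nat and x :: "nat \<Rightarrow> real^'n"
  assumes "d \<ge> 1"
    and "\<forall>i. 0 < H $ i \<and> H $ i < 1"
    and "frac_brownian_sheet M d H v"
    and "inj_on x {..<m}"
    and "\<forall>k<m. \<forall>i. 0 < x k $ i"
  shows "\<forall>c :: nat \<Rightarrow> real. (AE \<omega> in M. (\<Sum>k<m. c k * v \<omega> (x k) 0) = 0)
           \<longrightarrow> (\<forall>k<m. c k = 0)"
proof (intro allI impI)
  fix c :: "nat \<Rightarrow> real" and k
  assume AE_0: "AE \<omega> in M. (\<Sum>k<m. c k * v \<omega> (x k) 0) = 0" and "k < m"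
  have orthant: "x l \<in> nonneg_orthant" if "l \<in> {..<m}" for l
    using assms(5) that by (auto simp: nonneg_orthant_def less_imp_le)
  have "x ` {..<m} \<subseteq> {y. \<forall>i. y $ i \<noteq> 0}"
    using assms(5) by (auto simp: image_subset_iff) (metis less_irrefl)
  then have "spd_kernel (\<lambda>k l. fbs_cov H (x k) (x l)) {..<m}"
    by (rule spd_kernel_comp[OF spd_kernel_fbs_cov[OF assms(2)] assms(4)])
  then have "spd_kernel (\<lambda>k l. \<integral>\<omega>. v \<omega> (x k) 0 * v \<omega> (x l) 0 \<partial>M) {..<m}"
    by (rule spd_kernel_cong)
      (use frac_brownian_sheet_second_moment[OF assms(3) orthant orthant] assms(1) in auto)
  moreover have "(\<lambda>\<omega>. v \<omega> (x l) 0) \<in> borel_measurable M" if "l \<in> {..<m}" for l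
    using frac_brownian_sheet_measurable[OF assms(3) orthant[OF that]] assms(1) by simp
  ultimately show "c k = 0"
    using AE_0 \<open>k < m\<close>
    by (intro spd_second_moments_imp_coeff_eq_0[where X = "\<lambda>k \<omega>. v \<omega> (x k) 0" and c = c and k = k])
      auto
qed

end
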